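(* Let $k\geq 2$ be an integer. If $k$ is even, then $D_{2,k}=\langle k+1,k+2,\dots,2k+1\rangle$. If $k$ is odd, then $D_{2,k}=\left\langle \frac{k+1}{2},\frac{k+1}{2}+1,\frac{k+1}{2}+2,\dots,k\right\rangle$.
   Context: For positive integers $v,b,r,k$, a $(v,b,r,k)$-configuration is a connected bipartite graph with $v$ vertices on one side, each of degree $r$, and $b$ vertices on the other side, each of degree $k$, containing no cycle of length $4$. By convention the empty graph (with $v=b=0$) is also regarded as a configuration. A tuple $(v,b,r,k)$ is configurable if a $(v,b,r,k)$-configuration exists. Let $\mathbb{N}_0=\{0,1,2,\dots\}$ and define $$D_{r,k}=\left\{d\in\mathbb{N}_0:\left(d\tfrac{k}{\gcd(r,k)},\,d\tfrac{r}{\gcd(r,k)},\,r,\,k\right)\text{ is configurable}\right\}.$$ For integers $a_1,\dots,a_l\geq 1$, $\langle a_1,\dots,a_l\rangle$ denotes the set $\{n_1a_1+\dots+n_la_l: n_1,\dots,n_l\in\mathbb{N}_0\}$. *)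

theory Defs
  imports Main
begin

text \<open>Being a set, I has no multiple edges.\<close>

definition bip_edges :: "(nat \<times> nat) set \<Rightarrow> ((nat + nat) \<times> (nat + nat)) set" where
  "bip_edges I = {(Inl p, Inr l) | p l. (p, l) \<in> I} \<union> {(Inr l, Inl p) | p l. (p, l) \<in> I}"

definition bip_connected :: "nat set \<Rightarrow> nat set \<Rightarrow> (nat \<times> nat) set \<Rightarrow> bool" where
  "bip_connected P L I \<longleftrightarrow>
     (\<forall>x \<in> Inl ` P \<union> Inr ` L. \<forall>y \<in> Inl ` P \<union> Inr ` L. (x, y) \<in> (bip_edges I)\<^sup>*)"

definition is_configuration ::
  "nat set \<Rightarrow> nat set \<Rightarrow> (nat \<times> nat) set \<Rightarrow> nat \<Rightarrow> nat \<Rightarrow> nat \<Rightarrow> nat \<Rightarrow> bool" where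
  "is_configuration P L I v b r k \<longleftrightarrow>
     finite P \<and> finite L \<and> card P = v \<and> card L = b \<and> I \<subseteq> P \<times> L \<and>
     (\<forall>p \<in> P. card {l. (p, l) \<in> I} = r) \<and>
     (\<forall>l \<in> L. card {p. (p, l) \<in> I} = k) \<and>
     \<comment> \<open>no cycle of length 4\<close>
     (\<forall>p1 p2 l1 l2. p1 \<noteq> p2 \<and> l1 \<noteq> l2 \<and> (p1, l1) \<in> I \<and> (p2, l1) \<in> I \<and>
        (p1, l2) \<in> I \<longrightarrow> (p2, l2) \<notin> I) \<and>
     bip_connected P L I"

definition configurable :: "nat \<Rightarrow> nat \<Rightarrow> nat \<Rightarrow> nat \<Rightarrow> bool" where
  "configurable v b r k \<longleftrightarrow> (\<exists>P L I. is_configuration P L I v b r k)"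

definition Dset :: "nat \<Rightarrow> nat \<Rightarrow> nat set" where
  "Dset r k = {d. configurable (d * (k div gcd r k)) (d * (r div gcd r k)) r k}"

definition gen_monoid :: "nat set \<Rightarrow> nat set" where
  "gen_monoid A = {m. \<exists>n :: nat \<Rightarrow> nat. m = (\<Sum>a\<in>A. n a * a)}"

end

theory Submission
  imports Defs "HOL-Library.Nat_Bijection" "HOL-Number_Theory.Cong"
begin

text \<open>In a configuration with \<open>r = 2\<close> every point lies on exactly two blocks, so the points
  are the edges of a connected \<open>k\<close>-regular graph on the \<open>b\<close> blocks, and the absence of
  4-cycles says that this graph has no multiple edges.  A block and its \<open>k\<close> distinct
  neighbours give \<open>b \<ge> k + 1\<close>; conversely, for \<open>b \<ge> k + 1\<close> and \<open>bk\<close> even the circulant graph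
  on \<open>\<int>/b\<close> with a symmetric connection set of size \<open>k\<close> containing \<open>1\<close> is such a graph.
  Hence \<open>D\<^sub>2\<^sub>,\<^sub>k\<close> consists of \<open>0\<close> and all \<open>d\<close> with \<open>d \<cdot> 2/gcd(2,k) \<ge> k + 1\<close>, and this is the
  monoid generated by an interval \<open>[a, b]\<close> with \<open>b \<ge> 2a - 1\<close>.\<close>

lemma gen_monoid_add:
  assumes "m1 \<in> gen_monoid A" "m2 \<in> gen_monoid A"
  shows "m1 + m2 \<in> gen_monoid A"
proof -
  obtain n1 n2 where "m1 = (\<Sum>a\<in>A. n1 a * a)" "m2 = (\<Sum>a\<in>A. n2 a * a)"
    using assms unfolding gen_monoid_def by blast
  then have "m1 + m2 = (\<Sum>a\<in>A. (n1 a + n2 a) * a)"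
    by (simp add: sum.distrib distrib_right)
  then show ?thesis unfolding gen_monoid_def by (intro CollectI exI)
qed

lemma gen_monoid_generator:
  assumes "finite A" "x \<in> A"
  shows "x \<in> gen_monoid A"
proof -
  have "(\<Sum>a\<in>A. (if a = x then 1 else 0) * a) = (\<Sum>a\<in>A. if a = x then a else 0)"
    by (rule sum.cong) auto
  also have "\<dots> = x" using assms by (simp add: sum.delta)
  finally show ?thesis
    unfolding gen_monoid_def by (intro CollectI exI[of _ "\<lambda>a. if a = x then 1 else 0"]) simp
qed

lemma gen_monoid_atLeastAtMost:
  assumes "1 \<le> a" "2 * a - 1 \<le> b"
  shows "gen_monoid {a..b} = {d. d = 0 \<or> a \<le> d}"
proof (intro set_eqI iffI)
  fix m assume "m \<in> gen_monoid {a..b}"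
  then obtain n where m: "m = (\<Sum>x\<in>{a..b}. n x * x)" unfolding gen_monoid_def by blast
  show "m \<in> {d. d = 0 \<or> a \<le> d}"
  proof (cases "m = 0")
    case False
    then obtain x where x: "x \<in> {a..b}" "n x * x \<noteq> 0" using m by auto
    have "x \<le> n x * x" using x(2) by simp
    also have "\<dots> \<le> m" unfolding m by (rule member_le_sum) (use x in auto)
    finally show ?thesis using x(1) by simp
  qed simp
next
  fix d assume "d \<in> {d. d = 0 \<or> a \<le> d}"
  then consider "d = 0" | "a \<le> d" by blast
  then show "d \<in> gen_monoid {a..b}"
  proof cases
    case 1
    then show ?thesis unfolding gen_monoid_def by (intro CollectI exI[of _ "\<lambda>_. 0"]) simp
  next
    case 2
    then show ?thesis
    proof (induction d rule: less_induct)
      case (less d)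
      show ?case
      proof (cases "d \<le> b")
        case True
        then show ?thesis using gen_monoid_generator less.prems by simp
      next
        case False
        then have "d - a \<in> gen_monoid {a..b}" using less.IH assms by simp
        moreover have "a \<in> gen_monoid {a..b}" using gen_monoid_generator assms by simp
        ultimately have "(d - a) + a \<in> gen_monoid {a..b}" by (rule gen_monoid_add)
        then show ?thesis using less.prems by simp
      qed
    qed
  qed
qed

text \<open>The \<open>r - 1\<close> further blocks through the \<open>k\<close> points of a block are pairwise distinct,
  since two points sharing two blocks would form a 4-cycle.\<close>

lemma is_configuration_blocks_lower_bound:
  assumes conf: "is_configuration P L I v b r k" and l: "l \<in> L"
  shows "1 + k * (r - 1) \<le> b"
proof -
  have finP: "finite P" and finL: "finite L" and cardL: "card L = b" and IPL: "I \<subseteq> P \<times> L"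
    and pdeg: "\<And>p. p \<in> P \<Longrightarrow> card {l. (p, l) \<in> I} = r"
    and ldeg: "card {p. (p, l) \<in> I} = k"
    and no_C4: "\<And>p1 p2 l1 l2. p1 \<noteq> p2 \<Longrightarrow> l1 \<noteq> l2 \<Longrightarrow> (p1, l1) \<in> I \<Longrightarrow> (p2, l1) \<in> I \<Longrightarrow>
        (p1, l2) \<in> I \<Longrightarrow> (p2, l2) \<notin> I"
    using conf l unfolding is_configuration_def by blast+
  define S where "S = {p. (p, l) \<in> I}"
  define N where "N p = {l'. (p, l') \<in> I} - {l}" for p
  have "S \<subseteq> P" "N p \<subseteq> L - {l}" for p using IPL unfolding S_def N_def by auto
  then have finS: "finite S" and finN: "finite (N p)" for p
    using finP finL by (auto intro: finite_subset)
  have cardN: "card (N p) = r - 1" if "p \<in> S" for p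
  proof -
    have "p \<in> P" "l \<in> {l'. (p, l') \<in> I}" using that IPL unfolding S_def by auto
    then show ?thesis using pdeg unfolding N_def by simp
  qed
  have disjoint: "N p \<inter> N q = {}" if "p \<in> S" "q \<in> S" "p \<noteq> q" for p q
  proof (intro equals0I)
    fix l' assume "l' \<in> N p \<inter> N q"
    then show False using no_C4[of p q l l'] that unfolding S_def N_def by auto
  qed
  have "k * (r - 1) = (\<Sum>p\<in>S. card (N p))" using cardN ldeg unfolding S_def by simp
  also have "\<dots> = card (\<Union>p\<in>S. N p)" by (subst card_UN_disjoint) (use finS finN disjoint in auto)
  also have "\<dots> \<le> card (L - {l})"
    using \<open>\<And>p. N p \<subseteq> L - {l}\<close> finL by (intro card_mono) auto
  also have "\<dots> = b - 1" using finL l cardL by simp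
  moreover have "0 < b" using finL l cardL card_gt_0_iff by blast
  ultimately show ?thesis by linarith
qed

lemma configurable_empty: "configurable 0 0 r k"
  unfolding configurable_def
  by (intro exI[of _ "{}"]) (simp add: is_configuration_def bip_connected_def)

text \<open>Points are the edges of a graph on \<open>{0..<n}\<close>, coded as numbers by \<^const>\<open>set_encode\<close>;
  blocks are its vertices.\<close>

definition edge_incidence :: "nat set set \<Rightarrow> (nat \<times> nat) set" where
  "edge_incidence E = {(set_encode e, l) | e l. e \<in> E \<and> l \<in> e}"

lemma bip_connected_edge_incidence:
  assumes edges: "\<And>e. e \<in> E \<Longrightarrow> e \<noteq> {} \<and> e \<subseteq> {0..<n}"
    and path: "\<And>i. i + 1 < n \<Longrightarrow> {i, i + 1} \<in> E"
  shows "bip_connected (set_encode ` E) {0..<n} (edge_incidence E)"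
proof -
  define R where "R = bip_edges (edge_incidence E)"
  have step: "(Inr l, Inl (set_encode e)) \<in> R" "(Inl (set_encode e), Inr l) \<in> R"
    if "e \<in> E" "l \<in> e" for e l
    using that unfolding R_def bip_edges_def edge_incidence_def by blast+
  have block: "(Inr 0, Inr i) \<in> R\<^sup>*" if "i < n" for i
    using that
  proof (induction i)
    case (Suc i)
    then have "{i, i + 1} \<in> E" using path by simp
    then have "(Inr i, Inl (set_encode {i, i + 1})) \<in> R"
      "(Inl (set_encode {i, i + 1}), Inr (i + 1)) \<in> R"
      by (blast intro: step)+
    moreover have "(Inr 0, Inr i) \<in> R\<^sup>*" using Suc by simp
    ultimately show ?case by (simp add: rtrancl_into_rtrancl)
  qed simp
  have reach: "(Inr 0, x) \<in> R\<^sup>*" if "x \<in> Inl ` set_encode ` E \<union> Inr ` {0..<n}" for x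
    using that
  proof
    assume "x \<in> Inl ` set_encode ` E"
    then obtain e where e: "e \<in> E" "x = Inl (set_encode e)" by blast
    then obtain l where "l \<in> e" "l < n" using edges by fastforce
    then have "(Inr 0, Inr l) \<in> R\<^sup>*" "(Inr l, x) \<in> R" using e block step by simp_all
    then show ?thesis by (rule rtrancl_into_rtrancl)
  qed (use block in auto)
  have sym: "sym (R\<^sup>*)"
    by (intro sym_rtrancl) (auto simp: sym_def R_def bip_edges_def)
  show ?thesis
    unfolding bip_connected_def R_def[symmetric]
  proof (intro ballI)
    fix x y assume "x \<in> Inl ` set_encode ` E \<union> Inr ` {0..<n}"
      "y \<in> Inl ` set_encode ` E \<union> Inr ` {0..<n}"
    then have "(x, Inr 0) \<in> R\<^sup>*" "(Inr 0, y) \<in> R\<^sup>*" using reach sym by (blast dest: symD)+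
    then show "(x, y) \<in> R\<^sup>*" by (rule rtrancl_trans)
  qed
qed

lemma is_configuration_edge_incidence:
  assumes finE: "finite E" and edges: "\<And>e. e \<in> E \<Longrightarrow> card e = 2 \<and> e \<subseteq> {0..<n}"
    and deg: "\<And>v. v < n \<Longrightarrow> card {e \<in> E. v \<in> e} = k"
    and path: "\<And>i. i + 1 < n \<Longrightarrow> {i, i + 1} \<in> E"
  shows "is_configuration (set_encode ` E) {0..<n} (edge_incidence E) (card E) n 2 k"
  unfolding is_configuration_def
proof (intro conjI)
  have finite_edge: "finite e" and nonempty_edge: "e \<noteq> {}" if "e \<in> E" for e
    using edges[OF that] card.infinite by fastforce+
  then have inj: "inj_on set_encode E"
    by (meson inj_on_set_encode inj_on_subset mem_Collect_eq subsetI)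
  have points: "{l. (set_encode e, l) \<in> edge_incidence E} = e" if "e \<in> E" for e
    using that inj unfolding edge_incidence_def by (auto dest: inj_onD)
  have point_edge: "\<exists>e\<in>E. p = set_encode e" if "(p, l) \<in> edge_incidence E" for p l
    using that unfolding edge_incidence_def by blast
  show "card (set_encode ` E) = card E" using inj by (rule card_image)
  show "\<forall>p\<in>set_encode ` E. card {l. (p, l) \<in> edge_incidence E} = 2"
    using points edges by auto
  show "\<forall>l\<in>{0..<n}. card {p. (p, l) \<in> edge_incidence E} = k"
  proof
    fix l :: nat assume "l \<in> {0..<n}"
    have "{p. (p, l) \<in> edge_incidence E} = set_encode ` {e \<in> E. l \<in> e}"
      unfolding edge_incidence_def by auto
    moreover have "inj_on set_encode {e \<in> E. l \<in> e}" using inj by (rule inj_on_subset) auto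
    ultimately show "card {p. (p, l) \<in> edge_incidence E} = k"
      using card_image deg \<open>l \<in> {0..<n}\<close> by fastforce
  qed
  show "\<forall>p1 p2 l1 l2. p1 \<noteq> p2 \<and> l1 \<noteq> l2 \<and> (p1, l1) \<in> edge_incidence E \<and>
      (p2, l1) \<in> edge_incidence E \<and> (p1, l2) \<in> edge_incidence E \<longrightarrow> (p2, l2) \<notin> edge_incidence E"
  proof (intro allI impI notI)
    fix p1 p2 l1 l2
    assume "p1 \<noteq> p2 \<and> l1 \<noteq> l2 \<and> (p1, l1) \<in> edge_incidence E \<and> (p2, l1) \<in> edge_incidence E \<and>
      (p1, l2) \<in> edge_incidence E" and "(p2, l2) \<in> edge_incidence E"
    then have ne: "p1 \<noteq> p2" "l1 \<noteq> l2"
      and inc: "(p1, l1) \<in> edge_incidence E" "(p1, l2) \<in> edge_incidence E"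
        "(p2, l1) \<in> edge_incidence E" "(p2, l2) \<in> edge_incidence E" by blast+
    obtain e1 e2 where e: "e1 \<in> E" "e2 \<in> E" "p1 = set_encode e1" "p2 = set_encode e2"
      using point_edge inc(1,3) by metis
    have "{l1, l2} \<subseteq> e1" "{l1, l2} \<subseteq> e2"
      using inc points[OF e(1)] points[OF e(2)] unfolding e(3,4) by blast+
    moreover have "card {l1, l2} = card e1" "card {l1, l2} = card e2"
      using edges e(1,2) ne(2) by simp_all
    ultimately have "e1 = e2"
      using finite_edge e(1,2) by (metis card_subset_eq)
    then show False using e ne(1) by simp
  qed
  show "bip_connected (set_encode ` E) {0..<n} (edge_incidence E)"
    using edges nonempty_edge path by (intro bip_connected_edge_incidence) simp_all
qed (use finE edges in \<open>auto simp: edge_incidence_def\<close>)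

lemma regular_graph_handshake:
  assumes finE: "finite E" and edges: "\<And>e. e \<in> E \<Longrightarrow> card e = 2 \<and> e \<subseteq> {0..<n}"
    and deg: "\<And>v. v < n \<Longrightarrow> card {e \<in> E. v \<in> e} = k"
  shows "2 * card E = n * k"
proof -
  have "n * k = (\<Sum>v\<in>{0..<n}. card {e \<in> E. v \<in> e})" using deg by simp
  also have "\<dots> = (\<Sum>v\<in>{0..<n}. \<Sum>e\<in>E. if v \<in> e then 1 else 0)"
    using finE by (simp add: sum.If_cases Int_def)
  also have "\<dots> = (\<Sum>e\<in>E. \<Sum>v\<in>{0..<n}. if v \<in> e then 1 else 0)" by (rule sum.swap)
  also have "\<dots> = (\<Sum>e\<in>E. card e)"
    using edges by (intro sum.cong) (auto simp: sum.If_cases Int_absorb1)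
  also have "\<dots> = 2 * card E" using edges by simp
  finally show ?thesis by simp
qed

definition circulant_edges :: "nat \<Rightarrow> nat set \<Rightarrow> nat set set" where
  "circulant_edges n T = {{i, (i + t) mod n} | i t. i < n \<and> t \<in> T}"

lemma finite_circulant_edges: "finite (circulant_edges n T)"
  by (rule finite_subset[of _ "Pow {0..<n}"]) (auto simp: circulant_edges_def)

lemma mod_add_neq_self:
  fixes i t n :: nat
  assumes "i < n" "0 < t" "t < n"
  shows "(i + t) mod n \<noteq> i"
proof (cases "i + t < n")
  case False
  then have "(i + t) mod n = i + t - n" using assms by (simp add: le_mod_geq)
  then show ?thesis using assms False by linarith
qed (use assms in simp)

lemma circulant_edge:
  assumes "T \<subseteq> {1..<n}" "e \<in> circulant_edges n T"
  shows "card e = 2 \<and> e \<subseteq> {0..<n}"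
proof -
  obtain i t where "e = {i, (i + t) mod n}" "i < n" "t \<in> T"
    using assms(2) unfolding circulant_edges_def by blast
  moreover from this have "0 < t" "t < n" using assms(1) by auto
  ultimately show ?thesis using mod_add_neq_self[of i n t] by auto
qed

lemma circulant_degree:
  assumes T: "T \<subseteq> {1..<n}" and sym: "\<And>t. t \<in> T \<Longrightarrow> n - t \<in> T" and v: "v < n"
  shows "card {e \<in> circulant_edges n T. v \<in> e} = card T"
proof -
  let ?edge = "\<lambda>t. {v, (v + t) mod n}"
  have "{e \<in> circulant_edges n T. v \<in> e} = ?edge ` T"
  proof (intro set_eqI iffI)
    fix e assume "e \<in> {e \<in> circulant_edges n T. v \<in> e}"
    then obtain i t where it: "e = {i, (i + t) mod n}" "i < n" "t \<in> T" "v \<in> e"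
      unfolding circulant_edges_def by blast
    show "e \<in> ?edge ` T"
    proof (cases "v = i")
      case False
      then have "v = (i + t) mod n" using it by auto
      then have "(v + (n - t)) mod n = (i + n) mod n"
        using it(3) T by (auto simp: mod_add_left_eq)
      then have "e = ?edge (n - t)" using it \<open>v = (i + t) mod n\<close> by auto
      then show ?thesis using sym it(3) by blast
    qed (use it in blast)
  qed (use v in \<open>auto simp: circulant_edges_def\<close>)
  moreover have "inj_on ?edge T"
  proof
    fix t1 t2 assume t: "t1 \<in> T" "t2 \<in> T" "?edge t1 = ?edge t2"
    then have "(v + t1) mod n = (v + t2) mod n"
      using mod_add_neq_self[OF v] T by (auto simp: doubleton_eq_iff)
    then have "t1 mod n = t2 mod n"
      using cong_add_lcancel_nat unfolding cong_def by blast
    then show "t1 = t2" using t(1,2) T by (metis atLeastLessThan_iff mod_less subsetD)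
  qed
  ultimately show ?thesis by (simp add: card_image)
qed

lemma circulant_path_edge:
  assumes "1 \<in> T" "i + 1 < n"
  shows "{i, i + 1} \<in> circulant_edges n T"
  using assms unfolding circulant_edges_def by force

text \<open>The connection set \<open>{1..h} \<union> {n-h..<n}\<close>, \<open>h = k div 2\<close>, plus the involution-fixed
  residue \<open>n/2\<close> when \<open>k\<close> is odd (then \<open>n\<close> is even because \<open>nk\<close> is).\<close>

lemma symmetric_connection_set_exists:
  assumes k: "2 \<le> k" and n: "k + 1 \<le> n" and even: "even (n * k)"
  obtains T where "T \<subseteq> {1..<n}" "\<And>t. t \<in> T \<Longrightarrow> n - t \<in> T" "card T = k" "1 \<in> T"
proof
  define h where "h = k div 2"
  define T where "T = {1..h} \<union> {n - h..<n} \<union> (if odd k then {n div 2} else {})"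
  have h: "1 \<le> h" "k = 2 * h + (if odd k then 1 else 0)" using k unfolding h_def by auto
  have half: "h < n div 2" "n div 2 < n - h" "n - n div 2 = n div 2" if "odd k"
    using that even n unfolding h_def by auto
  show "T \<subseteq> {1..<n}" "1 \<in> T" using h n unfolding T_def by auto
  have "n - t \<in> {1..h} \<union> {n - h..<n}" if "t \<in> {1..h} \<union> {n - h..<n}" for t
    using that h n by auto
  then show "n - t \<in> T" if "t \<in> T" for t
    using that half(3) unfolding T_def by (auto split: if_splits)
  have "card ({1..h} \<union> {n - h..<n}) = 2 * h"
    using h n by (subst card_Un_disjoint) auto
  then show "card T = k"
    using half h unfolding T_def by (cases "odd k") auto
qed

lemma configurable_2_iff:
  assumes k: "2 \<le> k" and v: "2 * v = b * k"
  shows "configurable v b 2 k \<longleftrightarrow> b = 0 \<or> k + 1 \<le> b"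
proof
  assume "configurable v b 2 k"
  then obtain P L I where conf: "is_configuration P L I v b 2 k"
    unfolding configurable_def by blast
  show "b = 0 \<or> k + 1 \<le> b"
  proof (cases "L = {}")
    case False
    then obtain l where "l \<in> L" by blast
    then show ?thesis using is_configuration_blocks_lower_bound[OF conf] by simp
  qed (use conf in \<open>simp add: is_configuration_def\<close>)
next
  assume "b = 0 \<or> k + 1 \<le> b"
  then consider "b = 0" | "k + 1 \<le> b" by blast
  then show "configurable v b 2 k"
  proof cases
    case 1
    then show ?thesis using v configurable_empty by simp
  next
    case 2
    moreover have "even (b * k)" using v by presburger
    ultimately obtain T where T: "T \<subseteq> {1..<b}" "\<And>t. t \<in> T \<Longrightarrow> b - t \<in> T" "card T = k" "1 \<in> T"
      using symmetric_connection_set_exists k by blast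
    let ?E = "circulant_edges b T"
    have E: "finite ?E" "\<And>e. e \<in> ?E \<Longrightarrow> card e = 2 \<and> e \<subseteq> {0..<b}"
      "\<And>x. x < b \<Longrightarrow> card {e \<in> ?E. x \<in> e} = k" "\<And>i. i + 1 < b \<Longrightarrow> {i, i + 1} \<in> ?E"
      using finite_circulant_edges circulant_edge[OF T(1)] circulant_degree[OF T(1,2)]
        circulant_path_edge[OF T(4)] T(3) by simp_all
    have "card ?E = v" using regular_graph_handshake[OF E(1-3)] v by simp
    then show ?thesis
      using is_configuration_edge_incidence[OF E] unfolding configurable_def by auto
  qed
qed

lemma Dset_2_eq:
  assumes "2 \<le> k"
  shows "Dset 2 k = {d. d = 0 \<or> k + 1 \<le> d * (2 div gcd 2 k)}"
proof -
  define g where "g = gcd 2 k"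
  obtain a c where a: "2 = g * a" and c: "k = g * c"
    unfolding g_def by (meson dvdE gcd_dvd1 gcd_dvd2)
  have "0 < g" unfolding g_def by simp
  then have quotients: "2 div g = a" "k div g = c"
    by (metis a c nonzero_mult_div_cancel_left less_not_refl2)+
  have "2 * (d * c) = d * a * k" for d
    unfolding c by (simp add: a ac_simps)
  moreover have "a \<noteq> 0" using a by (metis mult_0_right zero_neq_numeral)
  ultimately show ?thesis
    unfolding Dset_def g_def[symmetric] quotients using configurable_2_iff[OF assms] by auto
qed

theorem corollary1:
  fixes k :: nat
  assumes "k \<ge> 2"
  shows "(even k \<longrightarrow> Dset 2 k = gen_monoid {k+1..2*k+1}) \<and>
         (odd k \<longrightarrow> Dset 2 k = gen_monoid {(k+1) div 2..k})"
proof (intro conjI impI)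
  assume "even k"
  then have "gcd 2 k = 2" by (simp add: gcd_nat.absorb1)
  then have "Dset 2 k = {d. d = 0 \<or> k + 1 \<le> d}" using Dset_2_eq[OF assms] by simp
  also have "\<dots> = gen_monoid {k+1..2*k+1}" by (rule gen_monoid_atLeastAtMost[symmetric]) auto
  finally show "Dset 2 k = gen_monoid {k+1..2*k+1}" .
next
  assume "odd k"
  then have "gcd 2 k = 1" by (simp add: coprime_iff_gcd_eq_1[symmetric])
  moreover have "k + 1 \<le> d * 2 \<longleftrightarrow> (k + 1) div 2 \<le> d" for d
    using \<open>odd k\<close> by presburger
  ultimately have "Dset 2 k = {d. d = 0 \<or> (k + 1) div 2 \<le> d}"
    using Dset_2_eq[OF assms] by simp
  also have "\<dots> = gen_monoid {(k+1) div 2..k}"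
    by (rule gen_monoid_atLeastAtMost[symmetric]) (use assms \<open>odd k\<close> in presburger)+
  finally show "Dset 2 k = gen_monoid {(k+1) div 2..k}" .
qed

end
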